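(* Let $p\ge5$ be a prime. Every finite subgroup of $\mathrm{D}(p,\mathbb{C})$ that is invariant under conjugation by $\mathrm{Alt}(p)$ is invariant under conjugation by $\mathrm{Sym}(p)$.
   Context: $\mathrm{D}(p,\mathbb{C})$ is the group of invertible diagonal $p\times p$ matrices; $\mathrm{Sym}(p)$ is identified with the group of permutation matrices via $\alpha\mapsto[\delta_{i\alpha,j}]_{i,j}$, and $\mathrm{Alt}(p)$ with its subgroup of even permutations. *)

theory Defs
  imports Complex_Main "Jordan_Normal_Form.Matrix" "HOL-Combinatorics.Permutations"
begin

definition diag_inv_mats :: "nat \<Rightarrow> complex mat set" where
  "diag_inv_mats p = {D. D \<in> carrier_mat p p \<and> diagonal_mat D \<and> invertible_mat D}"

definition is_subgroup_D :: "nat \<Rightarrow> complex mat set \<Rightarrow> bool" where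
  "is_subgroup_D p H \<longleftrightarrow> H \<subseteq> diag_inv_mats p \<and> 1\<^sub>m p \<in> H
     \<and> (\<forall>A\<in>H. \<forall>B\<in>H. A * B \<in> H)
     \<and> (\<forall>A\<in>H. \<exists>B\<in>H. A * B = 1\<^sub>m p \<and> B * A = 1\<^sub>m p)"

definition perm_mat :: "nat \<Rightarrow> (nat \<Rightarrow> nat) \<Rightarrow> complex mat" where
  "perm_mat p a = mat p p (\<lambda>(i,j). if a i = j then 1 else 0)"

text \<open>H is invariant under conjugation by the permutation matrix of alpha
  (P_alpha^{-1} = P_{alpha^{-1}}).\<close>
definition conj_invariant :: "nat \<Rightarrow> (nat \<Rightarrow> nat) \<Rightarrow> complex mat set \<Rightarrow> bool" where
  "conj_invariant p a H \<longleftrightarrow>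
     (\<lambda>D. perm_mat p a * D * perm_mat p (inv_into UNIV a)) ` H = H"

end

theory Submission
  imports Defs
begin

text \<open>Identify a subgroup of \<open>D(p,\<complex>)\<close> with the set \<open>F\<close> of its diagonals
  \<open>f\<close>; conjugation by the permutation matrix of \<open>a\<close> acts as \<open>f \<mapsto> f \<circ> a\<close>. As every
  odd permutation is an even one followed by the transposition \<open>(0 1)\<close>, it suffices to
  show \<open>f \<circ> (0 1) \<in> F\<close>. Three successive ratios \<open>h / (h \<circ> \<sigma>)\<close> by 3-cycles \<open>\<sigma>\<close>
  on the coordinates \<open>0,\<dots>,4\<close> turn \<open>f\<close> into \<open>w = (f\<^sub>0/f\<^sub>1, f\<^sub>1/f\<^sub>0, 1, \<dots>, 1)\<close>,
  and \<open>f / w = f \<circ> (0 1)\<close>. Only five coordinates are needed, so neither the primality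
  of \<open>p\<close> nor the finiteness of the subgroup plays a role.\<close>

lemma permutes_lessThan_in: "a permutes {..<n} \<Longrightarrow> i < n \<Longrightarrow> a i < n"
  by (meson lessThan_iff permutes_in_image)

lemma perm_mat_mult:
  assumes "a permutes {..<n}" and "A \<in> carrier_mat n m"
  shows "perm_mat n a * A = mat n m (\<lambda>(i,j). A $$ (a i, j))"
proof (rule eq_matI)
  fix i j assume "i < dim_row (mat n m (\<lambda>(i,j). A $$ (a i, j)))"
    and "j < dim_col (mat n m (\<lambda>(i,j). A $$ (a i, j)))"
  then have ij: "i < n" "j < m" by auto
  have "a i < n" using assms(1) ij(1) by (rule permutes_lessThan_in)
  then show "(perm_mat n a * A) $$ (i,j) = mat n m (\<lambda>(i,j). A $$ (a i, j)) $$ (i,j)"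
    using ij assms(2)
    by (simp add: perm_mat_def scalar_prod_def if_distrib[of "\<lambda>x. x * _"] cong: if_cong)
qed (use assms in \<open>auto simp: perm_mat_def\<close>)

lemma mult_perm_mat_inv:
  assumes "a permutes {..<n}" and "A \<in> carrier_mat m n"
  shows "A * perm_mat n (inv_into UNIV a) = mat m n (\<lambda>(i,j). A $$ (i, a j))"
proof (rule eq_matI)
  fix i j assume "i < dim_row (mat m n (\<lambda>(i,j). A $$ (i, a j)))"
    and "j < dim_col (mat m n (\<lambda>(i,j). A $$ (i, a j)))"
  then have ij: "i < m" "j < n" by auto
  have inv_eq: "inv_into UNIV a k = j \<longleftrightarrow> k = a j" for k
    using assms(1) by (metis permutes_inverses)
  have "a j < n" using assms(1) ij(2) by (rule permutes_lessThan_in)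
  then show "(A * perm_mat n (inv_into UNIV a)) $$ (i,j)
      = mat m n (\<lambda>(i,j). A $$ (i, a j)) $$ (i,j)"
    using ij assms(2)
    by (simp add: perm_mat_def scalar_prod_def inv_eq if_distrib[of "\<lambda>x. _ * x"] cong: if_cong)
qed (use assms in \<open>auto simp: perm_mat_def\<close>)

lemma perm_mat_conj_mat_diag:
  assumes "a permutes {..<n}"
  shows "perm_mat n a * mat_diag n f * perm_mat n (inv_into UNIV a) = mat_diag n (f \<circ> a)"
proof -
  have "perm_mat n a * mat_diag n f * perm_mat n (inv_into UNIV a)
      = mat n n (\<lambda>(i,j). mat_diag n f $$ (a i, j)) * perm_mat n (inv_into UNIV a)"
    by (simp add: perm_mat_mult[OF assms mat_diag_dim])
  also have "\<dots> = mat n n (\<lambda>(i,j). mat_diag n f $$ (a i, a j))"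
    by (rule eq_matI)
      (simp_all add: mult_perm_mat_inv[OF assms mat_carrier] permutes_lessThan_in[OF assms])
  also have "\<dots> = mat_diag n (f \<circ> a)"
    using permutes_lessThan_in[OF assms] permutes_inj[OF assms]
    by (intro eq_matI) (simp_all add: mat_diag_def inj_eq)
  finally show ?thesis .
qed

lemma mat_diag_eq_iff: "mat_diag n f = mat_diag n g \<longleftrightarrow> (\<forall>i<n. f i = g i)"
proof
  assume eq: "mat_diag n f = mat_diag n g"
  show "\<forall>i<n. f i = g i"
  proof (intro allI impI)
    fix i assume "i < n"
    then show "f i = g i"
      using arg_cong[OF eq, of "\<lambda>A. A $$ (i,i)"] by (simp add: mat_diag_def)
  qed
qed (auto simp: mat_diag_def)

lemma diag_inv_mats_eq_mat_diag:
  assumes "D \<in> diag_inv_mats n"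
  shows "D = mat_diag n (\<lambda>i. D $$ (i,i))"
  using assms unfolding diag_inv_mats_def diagonal_mat_def mat_diag_def
  by (intro eq_matI) auto

lemma is_subgroup_D_mat_diag_inverse:
  assumes "is_subgroup_D n H" and "mat_diag n f \<in> H"
  shows "\<forall>i<n. f i \<noteq> 0" and "mat_diag n (\<lambda>i. inverse (f i)) \<in> H"
proof -
  obtain B where "B \<in> H" and B: "mat_diag n f * B = 1\<^sub>m n"
    using assms unfolding is_subgroup_D_def by blast
  then have "B \<in> diag_inv_mats n"
    using assms(1) unfolding is_subgroup_D_def by blast
  then obtain g where g: "B = mat_diag n g" and "mat_diag n g \<in> H"
    using \<open>B \<in> H\<close> diag_inv_mats_eq_mat_diag by metis
  have fg: "\<forall>i<n. f i * g i = 1"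
    using B unfolding g mat_diag_diag mat_diag_one[symmetric] mat_diag_eq_iff .
  then show "\<forall>i<n. f i \<noteq> 0"
    by fastforce
  have "mat_diag n g = mat_diag n (\<lambda>i. inverse (f i))"
    using fg by (auto simp: mat_diag_eq_iff intro: inverse_unique[symmetric])
  with \<open>mat_diag n g \<in> H\<close> show "mat_diag n (\<lambda>i. inverse (f i)) \<in> H"
    by simp
qed

lemma conj_invariant_mat_diag_comp:
  assumes "conj_invariant n a H" and "a permutes {..<n}" and "mat_diag n f \<in> H"
  shows "mat_diag n (f \<circ> a) \<in> H"
  using assms unfolding conj_invariant_def perm_mat_conj_mat_diag[OF assms(2), symmetric]
  by blast

lemma conj_invariantI_mat_diag:
  assumes "a permutes {..<n}" and "H \<subseteq> diag_inv_mats n"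
    and closed: "\<And>f \<sigma>. mat_diag n f \<in> H \<Longrightarrow> \<sigma> permutes {..<n} \<Longrightarrow> mat_diag n (f \<circ> \<sigma>) \<in> H"
  shows "conj_invariant n a H"
  unfolding conj_invariant_def
proof
  show "(\<lambda>D. perm_mat n a * D * perm_mat n (inv_into UNIV a)) ` H \<subseteq> H"
  proof
    fix E assume "E \<in> (\<lambda>D. perm_mat n a * D * perm_mat n (inv_into UNIV a)) ` H"
    then obtain D where "D \<in> H" and E: "E = perm_mat n a * D * perm_mat n (inv_into UNIV a)"
      by blast
    then obtain f where D: "D = mat_diag n f"
      using assms(2) diag_inv_mats_eq_mat_diag by blast
    have "E = mat_diag n (f \<circ> a)"
      unfolding E D by (rule perm_mat_conj_mat_diag[OF assms(1)])
    then show "E \<in> H"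
      using closed \<open>D \<in> H\<close> assms(1) unfolding D by blast
  qed
next
  show "H \<subseteq> (\<lambda>D. perm_mat n a * D * perm_mat n (inv_into UNIV a)) ` H"
  proof
    fix D assume "D \<in> H"
    then obtain f where D: "D = mat_diag n f"
      using assms(2) diag_inv_mats_eq_mat_diag by blast
    have "f \<circ> inv_into UNIV a \<circ> a = f"
      using assms(1) by (simp add: fun_eq_iff)
    then have "D = perm_mat n a * mat_diag n (f \<circ> inv_into UNIV a)
        * perm_mat n (inv_into UNIV a)"
      by (simp add: D perm_mat_conj_mat_diag[OF assms(1)])
    moreover have "mat_diag n (f \<circ> inv_into UNIV a) \<in> H"
      using closed \<open>D \<in> H\<close> permutes_inv[OF assms(1)] unfolding D by blast
    ultimately show "D \<in> (\<lambda>D. perm_mat n a * D * perm_mat n (inv_into UNIV a)) ` H"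
      by blast
  qed
qed

locale alt_stable_torus_subgroup =
  fixes n :: nat and F :: "(nat \<Rightarrow> 'a::field) set"
  assumes divide_closed: "f \<in> F \<Longrightarrow> g \<in> F \<Longrightarrow> (\<lambda>i. f i / g i) \<in> F"
    and nonzero: "f \<in> F \<Longrightarrow> i < n \<Longrightarrow> f i \<noteq> 0"
    and agree_closed: "f \<in> F \<Longrightarrow> (\<And>i. i < n \<Longrightarrow> g i = f i) \<Longrightarrow> g \<in> F"
    and even_closed: "f \<in> F \<Longrightarrow> \<sigma> permutes {..<n} \<Longrightarrow> evenperm \<sigma> \<Longrightarrow> f \<circ> \<sigma> \<in> F"
begin

lemma ratio_closed:
  assumes "h \<in> F" and "\<sigma> permutes {..<n}" and "evenperm \<sigma>"
  shows "(\<lambda>i. h i / h (\<sigma> i)) \<in> F"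
  using divide_closed[OF assms(1) even_closed[OF assms]] by simp

lemma transpose_closed:
  assumes "5 \<le> n" and "f \<in> F"
  shows "f \<circ> transpose 0 1 \<in> F"
proof -
  have three_cycle: "transpose a b \<circ> transpose b c permutes {..<n}"
      "evenperm (transpose a b \<circ> transpose b c)"
    if "a < n" "b < n" "c < n" "a \<noteq> b" "b \<noteq> c" for a b c
    using that by (simp_all add: permutes_compose permutes_swap_id evenperm_comp
        permutation_swap_id evenperm_swap)
  define c where "c = transpose 0 2 \<circ> transpose (2::nat) 1"
  define d where "d = transpose 1 3 \<circ> transpose (3::nat) 4"
  define e where "e = transpose 0 1 \<circ> transpose (1::nat) 2"
  have cycles: "c permutes {..<n}" "evenperm c" "d permutes {..<n}" "evenperm d"
      "e permutes {..<n}" "evenperm e"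
    using assms(1) three_cycle[of 0 2 1] three_cycle[of 1 3 4] three_cycle[of 0 1 2]
    unfolding c_def d_def e_def by auto
  \<comment> \<open>On the coordinates \<open>0,\<dots>,4\<close>: \<open>z = (f\<^sub>0/f\<^sub>2, f\<^sub>1/f\<^sub>0, f\<^sub>2/f\<^sub>1, 1, 1)\<close>,
    \<open>y = (1, f\<^sub>1/f\<^sub>0, 1, 1, f\<^sub>0/f\<^sub>1)\<close> and \<open>w = (f\<^sub>0/f\<^sub>1, f\<^sub>1/f\<^sub>0, 1, 1, 1)\<close>;
    all three are \<open>1\<close> beyond.\<close>
  define z where "z i = f i / f (c i)" for i
  define y where "y i = z i / z (d i)" for i
  define w where "w i = y i / y (e i)" for i
  have "w \<in> F"
    unfolding w_def y_def z_def using assms(2) cycles by (intro ratio_closed)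
  have f_nonzero: "f 0 \<noteq> 0" "f 1 \<noteq> 0" "f 2 \<noteq> 0" "f 3 \<noteq> 0" "f 4 \<noteq> 0"
    using assms nonzero by auto
  have "(f \<circ> transpose 0 1) i = f i / w i" if "i < n" for i
  proof -
    consider "i = 0" | "i = 1" | "i = 2" | "i = 3" | "i = 4" | "5 \<le> i"
      by linarith
    then show ?thesis
    proof cases
      case 6
      then show ?thesis
        using nonzero[OF assms(2) that]
        by (simp add: w_def y_def z_def c_def d_def e_def transpose_def)
    qed (use f_nonzero in
        \<open>simp_all add: w_def y_def z_def c_def d_def e_def transpose_def field_simps\<close>)
  qed
  then show ?thesis
    using divide_closed[OF assms(2) \<open>w \<in> F\<close>] agree_closed by blast
qed

lemma permutes_closed:
  assumes "5 \<le> n" and "f \<in> F" and "\<sigma> permutes {..<n}"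
  shows "f \<circ> \<sigma> \<in> F"
proof (cases "evenperm \<sigma>")
  case True
  then show ?thesis using assms even_closed by blast
next
  case False
  have swap: "transpose 0 1 permutes {..<n}" "permutation (transpose (0::nat) 1)"
    using assms(1) by (auto simp: permutes_swap_id permutation_swap_id)
  have "permutation \<sigma>"
    using assms(3) by (auto simp: permutation_permutes)
  then have "evenperm (\<sigma> \<circ> transpose 0 1)"
    using False swap by (simp add: evenperm_comp evenperm_swap)
  then have "f \<circ> (\<sigma> \<circ> transpose 0 1) \<in> F"
    using assms swap by (simp add: even_closed permutes_compose)
  then have "f \<circ> (\<sigma> \<circ> transpose 0 1) \<circ> transpose 0 1 \<in> F"
    by (rule transpose_closed[OF assms(1)])
  then show ?thesis
    by (simp add: comp_assoc)
qed

end

theorem proposition8p1: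
  fixes p :: nat and H :: "complex mat set"
  assumes "prime p" and "p \<ge> 5"
    and "is_subgroup_D p H" and "finite H"
    and "\<And>a. a permutes {..<p} \<Longrightarrow> evenperm a \<Longrightarrow> conj_invariant p a H"
  shows "\<And>a. a permutes {..<p} \<Longrightarrow> conj_invariant p a H"
proof -
  interpret alt_stable_torus_subgroup p "{f. mat_diag p f \<in> H}"
  proof
    fix f g assume "f \<in> {f. mat_diag p f \<in> H}" "g \<in> {f. mat_diag p f \<in> H}"
    then have "mat_diag p f * mat_diag p (\<lambda>i. inverse (g i)) \<in> H"
      using assms(3) is_subgroup_D_mat_diag_inverse(2) unfolding is_subgroup_D_def by blast
    then show "(\<lambda>i. f i / g i) \<in> {f. mat_diag p f \<in> H}"
      by (simp add: divide_inverse)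
  next
    show "f i \<noteq> 0" if "f \<in> {f. mat_diag p f \<in> H}" "i < p" for f i
      using that is_subgroup_D_mat_diag_inverse(1)[OF assms(3)] by blast
  next
    show "g \<in> {f. mat_diag p f \<in> H}"
      if "f \<in> {f. mat_diag p f \<in> H}" "\<And>i. i < p \<Longrightarrow> g i = f i" for f g
      using that mat_diag_eq_iff[of p g f] by simp
  next
    show "f \<circ> \<sigma> \<in> {f. mat_diag p f \<in> H}"
      if "f \<in> {f. mat_diag p f \<in> H}" "\<sigma> permutes {..<p}" "evenperm \<sigma>" for f \<sigma>
      using that assms(5) conj_invariant_mat_diag_comp by blast
  qed
  fix a assume "a permutes {..<p}"
  then show "conj_invariant p a H"
    using assms(2,3) permutes_closed
    by (intro conj_invariantI_mat_diag) (auto simp: is_subgroup_D_def)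
qed

end
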